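(* Let $m \geqslant 2$ and $r \geqslant 4$, and let $\mathcal{A}$ be a multi-family of subsets of $[m]$. If $\mathcal{A}$ is a double cover of $[m]$ and $|\mathcal{A}| \leqslant r$, then $$\left|\Big\{\{A,B\} \in \binom{\mathcal{A}}{2} : A \cap B \neq \emptyset\Big\}\right| \,\leqslant\, \lambda(r)\left(\sum_{A \in \mathcal{A}} |A| - 2m\right) + m.$$
   Context: $\lambda(r) = \frac{\binom{r}{2}-2}{r-2}$. A multi-family $\mathcal{A}$ is a double cover of $X$ if every element of $X$ lies in at least two members of $\mathcal{A}$ (counted with multiplicity). $\binom{\mathcal{A}}{2}$ denotes the unordered pairs of distinct members of the multi-family (members with equal underlying sets count as distinct), and $|\mathcal{A}|$ and the sum count members with multiplicity. *)

theory Defs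
  imports Main Complex_Main
begin

definition lam :: "nat \<Rightarrow> real" where
  "lam r = (real (r choose 2) - 2) / (real r - 2)"

(* A multi-family is represented as a list of sets (members counted with multiplicity,
   i.e. by position). It is a double cover of X if every element of X lies in at least
   two members. *)
definition double_cover :: "'a set list \<Rightarrow> 'a set \<Rightarrow> bool" where
  "double_cover As X \<longleftrightarrow> (\<forall>x\<in>X. card {i. i < length As \<and> x \<in> As ! i} \<ge> 2)"

definition intersecting_pairs :: "'a set list \<Rightarrow> nat" where
  "intersecting_pairs As = card {(i, j). i < j \<and> j < length As \<and> As ! i \<inter> As ! j \<noteq> {}}"

end

theory Submission
  imports Defs
begin

text \<open>Write \<open>deg x\<close> for the number of members containing \<open>x\<close>. Every intersecting pair
  shares some element, so the number of intersecting pairs is at most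
  \<open>\<Sum>\<^sub>x (deg x choose 2)\<close>, while \<open>\<Sum>\<^sub>A |A| = \<Sum>\<^sub>x deg x\<close> turns the right-hand side into
  \<open>\<Sum>\<^sub>x (\<lambda>(r) (deg x - 2) + 1)\<close>. For \<open>2 \<le> d \<le> r - 1\<close> one has
  \<open>d choose 2 \<le> \<lambda>(r) (d - 2) + 1\<close>, which settles the case where no element lies in \<open>r\<close>
  members. Otherwise the family has exactly \<open>r\<close> members, so there are at most
  \<open>r choose 2 = \<lambda>(r) (r - 2) + 2\<close> pairs, and a second element of \<open>[m]\<close> contributes the missing \<open>1\<close>.\<close>

definition lam_weight :: "nat \<Rightarrow> nat \<Rightarrow> real" where
  "lam_weight r d = lam r * (real d - 2) + 1"

definition degree :: "'a set list \<Rightarrow> 'a \<Rightarrow> nat" where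
  "degree As x = length (filter (\<lambda>A. x \<in> A) As)"

lemma real_choose_two: "real (n choose 2) = real n * (real n - 1) / 2"
proof (cases n)
  case (Suc k)
  have "even (n * k)" using Suc by simp
  then have "real (n choose 2) = real (n * k) / 2"
    using Suc by (simp add: choose_two real_of_nat_div)
  then show ?thesis using Suc by (simp add: algebra_simps)
qed simp

lemma lam_nonneg:
  assumes "r \<ge> 4"
  shows "lam r \<ge> 0"
proof -
  have "real r * (real r - 1) \<ge> 4 * 3" by (rule mult_mono) (use assms in auto)
  then show ?thesis using assms unfolding lam_def by (simp add: real_choose_two)
qed

lemma lam_weight_ge_one:
  assumes "r \<ge> 4" "d \<ge> 2"
  shows "lam_weight r d \<ge> 1"
  using lam_nonneg[OF assms(1)] assms(2) unfolding lam_weight_def by simp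

lemma choose_two_eq_lam_weight:
  assumes "r > 2"
  shows "real (r choose 2) = lam_weight r r + 1"
  using assms unfolding lam_weight_def lam_def by (simp add: field_simps)

lemma choose_two_le_lam_weight:
  assumes "r \<ge> 4" "2 \<le> d" "d \<le> r - 1"
  shows "real (d choose 2) \<le> lam_weight r d"
proof -
  have "(real r - 2) * (real r - real d) \<ge> 2 * 1"
    by (rule mult_mono) (use assms in auto)
  then have "(real d + 1) * (real r - 2) + 2 \<le> (real r - 2) * (real r + 1)"
    by (simp add: algebra_simps)
  then have "(real d - 2) * ((real d + 1) * (real r - 2) + 2)
               \<le> (real d - 2) * ((real r - 2) * (real r + 1))"
    by (rule mult_left_mono) (use assms in simp)
  then show ?thesis
    using assms unfolding lam_weight_def lam_def
    by (simp add: real_choose_two field_simps)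
qed

lemma card_ordered_pairs_le_choose_two:
  fixes D :: "'a :: linorder set"
  assumes "finite D"
  shows "card {(i, j). i \<in> D \<and> j \<in> D \<and> i < j} \<le> card D choose 2"
proof -
  let ?P = "{(i, j). i \<in> D \<and> j \<in> D \<and> i < j}"
  have "inj_on (\<lambda>(i, j). {i, j}) ?P"
    by (auto simp: inj_on_def doubleton_eq_iff)
  moreover have "(\<lambda>(i, j). {i, j}) ` ?P \<subseteq> {S. S \<subseteq> D \<and> card S = 2}" by auto
  ultimately have "card ?P \<le> card {S. S \<subseteq> D \<and> card S = 2}"
    using assms by (intro card_inj_on_le) auto
  then show ?thesis using n_subsets[OF assms] by simp
qed

lemma degree_eq_card: "degree As x = card {i. i < length As \<and> x \<in> As ! i}"
  unfolding degree_def by (rule length_filter_conv_card)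

lemma degree_le_length: "degree As x \<le> length As"
  unfolding degree_def by (rule length_filter_le)

lemma double_cover_iff_degree: "double_cover As X \<longleftrightarrow> (\<forall>x\<in>X. degree As x \<ge> 2)"
  unfolding double_cover_def degree_eq_card ..

lemma sum_card_eq_sum_degree:
  assumes "finite X" "\<forall>A\<in>set As. A \<subseteq> X"
  shows "(\<Sum>A\<leftarrow>As. card A) = (\<Sum>x\<in>X. degree As x)"
  using assms(2)
proof (induction As)
  case (Cons A As)
  have "card A = (\<Sum>x\<in>X. if x \<in> A then 1 else 0)"
    using Cons.prems assms(1) by (simp add: sum.If_cases Int_absorb1)
  moreover have "degree (A # As) x = (if x \<in> A then 1 else 0) + degree As x" for x
    by (simp add: degree_def)
  ultimately show ?case
    using Cons by (simp add: sum.distrib)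
qed (simp add: degree_def)

lemma intersecting_pairs_le_choose_length:
  "intersecting_pairs As \<le> length As choose 2"
proof -
  have "intersecting_pairs As \<le> card {(i, j). i \<in> {..<length As} \<and> j \<in> {..<length As} \<and> i < j}"
    unfolding intersecting_pairs_def
    by (rule card_mono) (auto intro: finite_subset[of _ "{..<length As} \<times> {..<length As}"])
  then show ?thesis
    using card_ordered_pairs_le_choose_two[of "{..<length As}"] by simp
qed

lemma intersecting_pairs_le_sum_degree_choose:
  assumes "finite X" "\<forall>A\<in>set As. A \<subseteq> X"
  shows "intersecting_pairs As \<le> (\<Sum>x\<in>X. degree As x choose 2)"
proof -
  define D where "D x = {i. i < length As \<and> x \<in> As ! i}" for x
  define pairs where "pairs x = {(i, j). i \<in> D x \<and> j \<in> D x \<and> i < j}" for x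
  have finite_D: "finite (D x)" for x unfolding D_def by simp
  have "{(i, j). i < j \<and> j < length As \<and> As ! i \<inter> As ! j \<noteq> {}} \<subseteq> (\<Union>x\<in>X. pairs x)"
    using assms(2) unfolding pairs_def D_def by (fastforce dest: nth_mem)
  moreover have "finite (pairs x)" for x
    unfolding pairs_def by (rule finite_subset[of _ "D x \<times> D x"]) (auto simp: finite_D)
  ultimately have "intersecting_pairs As \<le> card (\<Union>x\<in>X. pairs x)"
    unfolding intersecting_pairs_def using assms(1) by (intro card_mono) auto
  also have "\<dots> \<le> (\<Sum>x\<in>X. card (pairs x))"
    by (rule card_UN_le) (rule assms(1))
  also have "\<dots> \<le> (\<Sum>x\<in>X. degree As x choose 2)"
    unfolding pairs_def degree_eq_card D_def[symmetric]
    by (intro sum_mono card_ordered_pairs_le_choose_two finite_D)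
  finally show ?thesis .
qed

lemma intersecting_pairs_le_sum_lam_weight_small_degrees:
  assumes "finite X" "r \<ge> 4"
    and "\<forall>A\<in>set As. A \<subseteq> X" "double_cover As X"
    and "\<forall>x\<in>X. degree As x < r"
  shows "real (intersecting_pairs As) \<le> (\<Sum>x\<in>X. lam_weight r (degree As x))"
proof -
  have "real (intersecting_pairs As) \<le> (\<Sum>x\<in>X. real (degree As x choose 2))"
    using intersecting_pairs_le_sum_degree_choose[OF assms(1,3)]
    by (simp flip: of_nat_sum)
  also have "\<dots> \<le> (\<Sum>x\<in>X. lam_weight r (degree As x))"
    using assms(2,4,5) unfolding double_cover_iff_degree
    by (intro sum_mono choose_two_le_lam_weight) auto
  finally show ?thesis .
qed

lemma intersecting_pairs_le_sum_lam_weight_full_degree: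
  assumes "finite X" "r \<ge> 4" "double_cover As X" "length As \<le> r"
    and "x \<in> X" "degree As x \<ge> r" "y \<in> X" "y \<noteq> x"
  shows "real (intersecting_pairs As) \<le> (\<Sum>x\<in>X. lam_weight r (degree As x))"
proof -
  have length_As: "length As = r" and degree_x: "degree As x = r"
    using degree_le_length[of As x] assms(4,6) by auto
  have weight_ge_one: "z \<in> X \<Longrightarrow> lam_weight r (degree As z) \<ge> 1" for z
    using assms(2,3) by (simp add: double_cover_iff_degree lam_weight_ge_one)
  have "real (intersecting_pairs As) \<le> real (r choose 2)"
    using intersecting_pairs_le_choose_length[of As] length_As by simp
  also have "\<dots> = lam_weight r (degree As x) + 1"
    using assms(2) degree_x by (simp add: choose_two_eq_lam_weight)
  also have "\<dots> \<le> lam_weight r (degree As x) + lam_weight r (degree As y)"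
    using weight_ge_one[OF assms(7)] by simp
  also have "\<dots> = (\<Sum>z\<in>{x, y}. lam_weight r (degree As z))"
    using assms(8) by simp
  also have "\<dots> \<le> (\<Sum>z\<in>X. lam_weight r (degree As z))"
    using assms(1,5,7) weight_ge_one by (intro sum_mono2) force+
  finally show ?thesis .
qed

theorem lemma3p5:
  fixes m r :: nat and As :: "nat set list"
  assumes "m \<ge> 2" and "r \<ge> 4"
    and "\<forall>A\<in>set As. A \<subseteq> {1..m}"
    and "double_cover As {1..m}"
    and "length As \<le> r"
  shows "real (intersecting_pairs As)
           \<le> lam r * (real (\<Sum>A\<leftarrow>As. card A) - 2 * real m) + real m"
proof -
  have rhs: "lam r * (real (\<Sum>A\<leftarrow>As. card A) - 2 * real m) + real m
               = (\<Sum>x\<in>{1..m}. lam_weight r (degree As x))"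
    unfolding sum_card_eq_sum_degree[OF finite_atLeastAtMost assms(3)] lam_weight_def
    by (simp add: sum.distrib sum_distrib_left sum_subtractf algebra_simps)
  show ?thesis
  proof (cases "\<exists>x\<in>{1..m}. degree As x \<ge> r")
    case True
    then obtain x where x: "x \<in> {1..m}" "degree As x \<ge> r" by blast
    obtain y where "y \<in> {1..m}" "y \<noteq> x"
      using assms(1) by (cases "x = 1") (auto intro: that[of 1] that[of 2])
    then show ?thesis
      unfolding rhs using x assms
      by (intro intersecting_pairs_le_sum_lam_weight_full_degree) auto
  next
    case False
    then show ?thesis
      unfolding rhs using assms
      by (intro intersecting_pairs_le_sum_lam_weight_small_degrees) auto
  qed
qed

end
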